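(* Let $\boldsymbol s\in S_{m|n}$ and $\boldsymbol y=(y_1,\dots,y_{m+n-1})$ a sequence of polynomials, $i\in\{1,\dots,m+n-1\}$, and suppose there exists a polynomial $\tilde y_i$ satisfying $\mathrm{Wr}^{s_i}(y_i,\tilde y_i)=T_i^{\boldsymbol s}(T_{i+1}^{\boldsymbol s})^{-1}y_{i-1}[-s_i]y_{i+1}$ if $s_i=s_{i+1}$, or $y_i\tilde y_i[-s_i]=\varphi_i^{\boldsymbol s}y_{i-1}[-s_i]y_{i+1}-\psi_i^{\boldsymbol s}y_{i-1}y_{i+1}[-s_i]$ if $s_i=-s_{i+1}$. Let $\boldsymbol y^{[i]}=(y_1,\dots,\tilde y_i,\dots,y_{m+n-1})$, and $\boldsymbol s'=\boldsymbol s$ if $s_i=s_{i+1}$, $\boldsymbol s'=\boldsymbol s^{[i]}$ if $s_i=-s_{i+1}$. Then $\mathcal E^{\boldsymbol s}_{\boldsymbol y}(x)=\mathcal E^{\boldsymbol s'}_{\boldsymbol y^{[i]}}(x)$.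
   Context: Fix $h\in\mathbb{C}^\times$, $m,n\ge0$; $f[i](x)=f(x-ih)$; $\mathrm{Wr}^{\epsilon}(g_1,g_2)=g_1g_2[-\epsilon]-g_2g_1[-\epsilon]$. $S_{m|n}$: $\boldsymbol s\in\{\pm1\}^{m+n}$ with $m$ entries $1$; $\sigma_{\boldsymbol s}(i)=\#\{j\le i:s_j=1\}$ if $s_i=1$, $m+\#\{j\le i:s_j=-1\}$ if $s_i=-1$; $\boldsymbol s^{[i]}$ swaps entries $i,i+1$. Polynomial weights $\lambda\in\mathbb{Z}^{m+n}_{\ge0}$ ($\lambda_1\ge\dots\ge\lambda_m$, $\lambda_{m+1}\ge\dots\ge\lambda_{m+n}$, $\lambda_{m+k}=0$ for $k>\lambda_m$); $\lambda^{\boldsymbol s}_i$ the eigenvalue of $e_{\sigma_{\boldsymbol s}(i)\sigma_{\boldsymbol s}(i)}$ on the unique-up-to-scalar nonzero $v\in L_\lambda$ with $e_{\sigma_{\boldsymbol s}(a)\sigma_{\boldsymbol s}(b)}v=0$ for $a<b$; for $\boldsymbol\lambda=(\lambda^{(1)},\dots,\lambda^{(p)})$, $\lambda_i^{(k,\boldsymbol s)}=(\lambda^{(k)})^{\boldsymbol s}_i$. $\boldsymbol z\in\mathbb{C}^p$ $h$-generic ($z_i-z_j\notin h\mathbb{Z}$). $T_i^{\boldsymbol s}=\prod_k\prod_{j=1}^{\lambda_i^{(k,\boldsymbol s)}}(x-z_k+s_ijh)$; for $s_i\ne s_{i+1}$, $\varphi_i^{\boldsymbol s}=\prod_k(x-z_k+s_i\lambda_i^{(k,\boldsymbol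 s)}h)$, $\psi_i^{\boldsymbol s}=\prod_k(x-z_k+s_{i+1}\lambda_{i+1}^{(k,\boldsymbol s)}h)$ over $k$ with $\lambda_i^{(k,\boldsymbol s)}+\lambda_{i+1}^{(k,\boldsymbol s)}\ne0$. With $y_0=y_{m+n}=1$, \[\mathcal E^{\boldsymbol s}_{\boldsymbol y}(x)=\sum_{a=1}^{m+n}s_a\frac{T_a^{\boldsymbol s}}{T_a^{\boldsymbol s}[s_a]}\frac{y_{a-1}[-s_a]}{y_{a-1}}\frac{y_a[s_a]}{y_a}.\] *)

theory Defs
  imports Complex_Main "HOL-Computational_Algebra.Polynomial"
begin

(* All sequences are 1-indexed functions on nat; only indices 1..m+n matter. *)

definition sign_seqs :: "nat \<Rightarrow> nat \<Rightarrow> (nat \<Rightarrow> int) set" where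
  "sign_seqs m n = {s. (\<forall>i\<in>{1..m+n}. s i = 1 \<or> s i = -1) \<and> card {i\<in>{1..m+n}. s i = 1} = m}"

definition cnt_plus :: "(nat \<Rightarrow> int) \<Rightarrow> nat \<Rightarrow> nat" where
  "cnt_plus s i = card {j\<in>{1..i}. s j = 1}"

definition cnt_minus :: "(nat \<Rightarrow> int) \<Rightarrow> nat \<Rightarrow> nat" where
  "cnt_minus s i = card {j\<in>{1..i}. s j = -1}"

definition sigma_s :: "nat \<Rightarrow> (nat \<Rightarrow> int) \<Rightarrow> nat \<Rightarrow> nat" where
  "sigma_s m s i = (if s i = 1 then cnt_plus s i else m + cnt_minus s i)"

definition swap_seq :: "(nat \<Rightarrow> int) \<Rightarrow> nat \<Rightarrow> (nat \<Rightarrow> int)" where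
  "swap_seq s i = s(i := s (i+1), i+1 := s i)"

definition poly_weight :: "nat \<Rightarrow> nat \<Rightarrow> (nat \<Rightarrow> nat) \<Rightarrow> bool" where
  "poly_weight m n lam \<longleftrightarrow>
     (\<forall>i j. 1 \<le> i \<and> i \<le> j \<and> j \<le> m \<longrightarrow> lam j \<le> lam i) \<and>
     (\<forall>i j. m + 1 \<le> i \<and> i \<le> j \<and> j \<le> m + n \<longrightarrow> lam j \<le> lam i) \<and>
     (0 < m \<longrightarrow> (\<forall>k. 1 \<le> k \<and> k \<le> n \<and> lam m < k \<longrightarrow> lam (m + k) = 0))"

text \<open>lambda^s_i, the eigenvalue of e_{sigma_s(i) sigma_s(i)} on the s-highest weight vector of L_lambda,
  given by the standard hook Young diagram description (Cheng--Wang): the hook diagram of lambda has rows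
  r = 1..m of length lambda_r and columns c = 1..n of length #{r \<le> m. lambda_r \<ge> c} + lambda_{m+c}.
  With a = cnt_plus s i, b = cnt_minus s i: if s_i = 1, lambda^s_i is the length of row a to the
  right of column b; if s_i = -1, it is the length of column b below row a.\<close>
definition s_weight :: "nat \<Rightarrow> (nat \<Rightarrow> nat) \<Rightarrow> (nat \<Rightarrow> int) \<Rightarrow> nat \<Rightarrow> nat" where
  "s_weight m lam s i =
     (let a = cnt_plus s i; b = cnt_minus s i in
      if s i = 1 then lam a - b
      else (card {r\<in>{1..m}. b \<le> lam r} + lam (m + b)) - a)"

definition shev :: "complex \<Rightarrow> complex poly \<Rightarrow> int \<Rightarrow> complex \<Rightarrow> complex" where
  "shev h f j x = poly f (x - of_int j * h)"

definition Tfun :: "complex \<Rightarrow> (nat \<Rightarrow> complex) \<Rightarrow> nat \<Rightarrow> nat \<Rightarrow> (nat \<Rightarrow> nat \<Rightarrow> nat)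
                      \<Rightarrow> (nat \<Rightarrow> int) \<Rightarrow> nat \<Rightarrow> complex \<Rightarrow> complex" where
  "Tfun h z p m lam s i x =
     (\<Prod>k\<in>{1..p}. \<Prod>j\<in>{1..s_weight m (lam k) s i}. x - z k + of_int (s i) * of_nat j * h)"

definition phifun :: "complex \<Rightarrow> (nat \<Rightarrow> complex) \<Rightarrow> nat \<Rightarrow> nat \<Rightarrow> (nat \<Rightarrow> nat \<Rightarrow> nat)
                      \<Rightarrow> (nat \<Rightarrow> int) \<Rightarrow> nat \<Rightarrow> complex \<Rightarrow> complex" where
  "phifun h z p m lam s i x =
     (\<Prod>k\<in>{k\<in>{1..p}. s_weight m (lam k) s i + s_weight m (lam k) s (i+1) \<noteq> 0}.
        x - z k + of_int (s i) * of_nat (s_weight m (lam k) s i) * h)"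

definition psifun :: "complex \<Rightarrow> (nat \<Rightarrow> complex) \<Rightarrow> nat \<Rightarrow> nat \<Rightarrow> (nat \<Rightarrow> nat \<Rightarrow> nat)
                      \<Rightarrow> (nat \<Rightarrow> int) \<Rightarrow> nat \<Rightarrow> complex \<Rightarrow> complex" where
  "psifun h z p m lam s i x =
     (\<Prod>k\<in>{k\<in>{1..p}. s_weight m (lam k) s i + s_weight m (lam k) s (i+1) \<noteq> 0}.
        x - z k + of_int (s (i+1)) * of_nat (s_weight m (lam k) s (i+1)) * h)"

definition Yext :: "nat \<Rightarrow> nat \<Rightarrow> (nat \<Rightarrow> complex poly) \<Rightarrow> nat \<Rightarrow> complex poly" where
  "Yext m n y a = (if a = 0 \<or> a = m + n then 1 else y a)"

definition Efun :: "complex \<Rightarrow> (nat \<Rightarrow> complex) \<Rightarrow> nat \<Rightarrow> nat \<Rightarrow> nat \<Rightarrow> (nat \<Rightarrow> nat \<Rightarrow> nat)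
                      \<Rightarrow> (nat \<Rightarrow> int) \<Rightarrow> (nat \<Rightarrow> complex poly) \<Rightarrow> complex \<Rightarrow> complex" where
  "Efun h z p m n lam s y x =
     (\<Sum>a\<in>{1..m+n}. of_int (s a)
        * (Tfun h z p m lam s a x / Tfun h z p m lam s a (x - of_int (s a) * h))
        * (shev h (Yext m n y (a - 1)) (- s a) x / poly (Yext m n y (a - 1)) x)
        * (shev h (Yext m n y a) (s a) x / poly (Yext m n y a) x))"

definition Edef :: "complex \<Rightarrow> (nat \<Rightarrow> complex) \<Rightarrow> nat \<Rightarrow> nat \<Rightarrow> nat \<Rightarrow> (nat \<Rightarrow> nat \<Rightarrow> nat)
                      \<Rightarrow> (nat \<Rightarrow> int) \<Rightarrow> (nat \<Rightarrow> complex poly) \<Rightarrow> complex \<Rightarrow> bool" where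
  "Edef h z p m n lam s y x \<longleftrightarrow>
     (\<forall>a\<in>{1..m+n}. Tfun h z p m lam s a (x - of_int (s a) * h) \<noteq> 0
        \<and> poly (Yext m n y (a - 1)) x \<noteq> 0 \<and> poly (Yext m n y a) x \<noteq> 0)"

end

theory Submission
  imports Defs
begin

(*
  Only the i-th and (i+1)-st summands of E involve y_i or the order of s_i and s_(i+1),
  so it suffices to compare these two summands before and after the change.

  If s_i = s_(i+1), the Wronskian relation read at x and at x - s_i h makes the difference
  of the two pairs vanish.

  If s_i = -s_(i+1), the hook diagram description of the weights shows that at every z_k
  with \<lambda>_i + \<lambda>_(i+1) \<noteq> 0 the swap turns (\<lambda>_i, \<lambda>_(i+1)) into
  (\<lambda>_(i+1) + 1, \<lambda>_i - 1), while the remaining z_k contribute to neither pair. Hence the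
  ratios T_a(x) / T_a(x - s_a h) of the two old and the two new summands are \<phi>(x), \<psi>(x),
  \<psi>(x - s_i h) and \<phi>(x - s_i h), each divided by the product U(x) of the x - z_k over the
  first kind of z_k. The relation defining the new polynomial, read at x and at x - s_i h,
  then turns both pairs into s_i y_i(x - s_i h) y~_i(x + s_i h) / (U(x) y_(i-1)(x) y_(i+1)(x)).
*)

lemma card_filter_atLeastAtMost_Suc:
  "card {j\<in>{1..Suc k}. P j} = card {j\<in>{1..k}. P j} + (if P (Suc k) then 1 else 0)"
proof -
  have "{j\<in>{1..Suc k}. P j} = (if P (Suc k) then insert (Suc k) {j\<in>{1..k}. P j} else {j\<in>{1..k}. P j})"
    by (auto simp: le_Suc_eq)
  then show ?thesis by simp
qed

lemma cnt_plus_Suc: "cnt_plus s (Suc k) = cnt_plus s k + (if s (Suc k) = 1 then 1 else 0)"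
  unfolding cnt_plus_def by (rule card_filter_atLeastAtMost_Suc)

lemma cnt_minus_Suc: "cnt_minus s (Suc k) = cnt_minus s k + (if s (Suc k) = -1 then 1 else 0)"
  unfolding cnt_minus_def by (rule card_filter_atLeastAtMost_Suc)

lemma swap_seq_other: "a \<noteq> i \<Longrightarrow> a \<noteq> i + 1 \<Longrightarrow> swap_seq s i a = s a"
  by (simp add: swap_seq_def)

lemma swap_seq_swap_seq [simp]: "swap_seq (swap_seq s i) i = s"
  by (simp add: swap_seq_def fun_eq_iff)

lemma card_filter_swap_seq:
  assumes "1 \<le> i" "a \<noteq> i"
  shows "card {j\<in>{1..a}. swap_seq s i j = c} = card {j\<in>{1..a}. s j = c}"
proof -
  define \<tau> where "\<tau> j = (if j = i then i + 1 else if j = i + 1 then i else j)" for j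
  have "bij_betw \<tau> {j\<in>{1..a}. swap_seq s i j = c} {j\<in>{1..a}. s j = c}"
    by (rule bij_betw_byWitness[where f' = \<tau>])
      (use assms in \<open>auto simp: \<tau>_def swap_seq_def split: if_splits\<close>)
  then show ?thesis by (rule bij_betw_same_card)
qed

lemma cnt_plus_swap_seq: "1 \<le> i \<Longrightarrow> a \<noteq> i \<Longrightarrow> cnt_plus (swap_seq s i) a = cnt_plus s a"
  unfolding cnt_plus_def by (rule card_filter_swap_seq)

lemma cnt_minus_swap_seq: "1 \<le> i \<Longrightarrow> a \<noteq> i \<Longrightarrow> cnt_minus (swap_seq s i) a = cnt_minus s a"
  unfolding cnt_minus_def by (rule card_filter_swap_seq)

lemma swap_seq_in_sign_seqs:
  assumes "s \<in> sign_seqs m n" "1 \<le> i" "i + 1 \<le> m + n"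
  shows "swap_seq s i \<in> sign_seqs m n"
  using assms cnt_plus_swap_seq[of i "m + n" s]
  by (auto simp: sign_seqs_def cnt_plus_def swap_seq_def)

lemma cnt_plus_le:
  assumes "s \<in> sign_seqs m n" "a \<le> m + n"
  shows "cnt_plus s a \<le> m"
proof -
  have "card {j\<in>{1..a}. s j = 1} \<le> card {j\<in>{1..m+n}. s j = 1}"
    by (rule card_mono) (use assms in auto)
  then show ?thesis using assms by (simp add: cnt_plus_def sign_seqs_def)
qed

lemma cnt_minus_le:
  assumes "s \<in> sign_seqs m n" "a \<le> m + n"
  shows "cnt_minus s a \<le> n"
proof -
  have "card {j\<in>{1..a}. s j = -1} \<le> card ({1..m+n} - {j\<in>{1..m+n}. s j = 1})"
    by (rule card_mono) (use assms in auto)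
  also have "\<dots> = (m + n) - m"
    by (subst card_Diff_subset) (use assms in \<open>auto simp: sign_seqs_def\<close>)
  finally show ?thesis by (simp add: cnt_minus_def)
qed

lemma s_weight_swap_seq_other:
  "1 \<le> i \<Longrightarrow> a \<noteq> i \<Longrightarrow> a \<noteq> i + 1 \<Longrightarrow> s_weight m L (swap_seq s i) a = s_weight m L s a"
  by (simp add: s_weight_def swap_seq_other cnt_plus_swap_seq cnt_minus_swap_seq)

text \<open>col is the length of column c + 1 of the hook diagram: the box (r + 1, c + 1) belongs
  to row r + 1 exactly when it belongs to that column.\<close>
lemma poly_weight_box_cases:
  assumes pw: "poly_weight m n L" and "r < m" "c < n"
  defines "col \<equiv> card {q\<in>{1..m}. c < L q} + L (m + (c + 1))"
  shows "(c < L (r + 1) \<and> r < col) \<or> (L (r + 1) \<le> c \<and> col \<le> r)"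
proof (cases "c < L (r + 1)")
  case True
  have "{1..r+1} \<subseteq> {q\<in>{1..m}. c < L q}"
  proof
    fix q assume "q \<in> {1..r+1}"
    then have "L (r + 1) \<le> L q" "q \<le> m"
      using pw \<open>r < m\<close> unfolding poly_weight_def by auto
    with True \<open>q \<in> {1..r+1}\<close> show "q \<in> {q\<in>{1..m}. c < L q}" by simp
  qed
  from card_mono[OF _ this] have "r < col" by (simp add: col_def)
  with True show ?thesis by blast
next
  case False
  have "{q\<in>{1..m}. c < L q} \<subseteq> {1..r}"
  proof
    fix q assume q: "q \<in> {q\<in>{1..m}. c < L q}"
    have "L q \<le> L (r + 1)" if "r + 1 \<le> q"
      using pw q that unfolding poly_weight_def by simp
    with q False show "q \<in> {1..r}" by fastforce
  qed
  from card_mono[OF _ this] have "card {q\<in>{1..m}. c < L q} \<le> r" by simp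
  moreover have "L (m + (c + 1)) = 0"
  proof -
    have "L m \<le> L (r + 1)" using pw \<open>r < m\<close> unfolding poly_weight_def by simp
    with False have "L m < c + 1" by simp
    moreover have "\<forall>k. 1 \<le> k \<and> k \<le> n \<and> L m < k \<longrightarrow> L (m + k) = 0"
      using pw \<open>r < m\<close> unfolding poly_weight_def by simp
    ultimately show ?thesis using \<open>c < n\<close> by (auto dest: spec[where x = "c + 1"])
  qed
  ultimately show ?thesis using False by (simp add: col_def)
qed

lemma s_weight_swap_plus_minus:
  assumes s_in: "s \<in> sign_seqs m n" and i: "1 \<le> i" "i + 1 \<le> m + n"
    and si: "s i = 1" "s (i + 1) = -1" and pw: "poly_weight m n L"
  defines "s' \<equiv> swap_seq s i"
  shows "(s_weight m L s i + s_weight m L s (i + 1) = 0 \<and> s_weight m L s' i + s_weight m L s' (i + 1) = 0)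
    \<or> (s_weight m L s' i = s_weight m L s (i + 1) + 1 \<and> s_weight m L s i = s_weight m L s' (i + 1) + 1)"
proof -
  obtain k where k: "i = Suc k" using i by (cases i) auto
  define r c where "r = cnt_plus s k" and "c = cnt_minus s k"
  have s': "s' i = -1" "s' (i + 1) = 1" "cnt_plus s' k = r" "cnt_minus s' k = c"
    using si i k cnt_plus_swap_seq[of i k s] cnt_minus_swap_seq[of i k s]
    by (auto simp: s'_def r_def c_def swap_seq_def)
  have cnt: "cnt_plus s i = r + 1" "cnt_minus s i = c"
    "cnt_plus s (i + 1) = r + 1" "cnt_minus s (i + 1) = c + 1"
    "cnt_plus s' i = r" "cnt_minus s' i = c + 1"
    "cnt_plus s' (i + 1) = r + 1" "cnt_minus s' (i + 1) = c + 1"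
    using si s' by (simp_all add: k r_def c_def cnt_plus_Suc cnt_minus_Suc)
  have "r < m" "c < n"
    using cnt(3,4) cnt_plus_le[OF s_in i(2)] cnt_minus_le[OF s_in i(2)] by simp_all
  define col where "col = card {q\<in>{1..m}. c < L q} + L (m + (c + 1))"
  have w: "s_weight m L s i = L (r + 1) - c" "s_weight m L s (i + 1) = col - (r + 1)"
    "s_weight m L s' i = col - r" "s_weight m L s' (i + 1) = L (r + 1) - (c + 1)"
    using si s' cnt by (simp_all add: s_weight_def col_def Suc_le_eq)
  from poly_weight_box_cases[OF pw \<open>r < m\<close> \<open>c < n\<close>] show ?thesis
    unfolding w col_def[symmetric] by auto
qed

lemma s_weight_swap_odd:
  assumes s_in: "s \<in> sign_seqs m n" and i: "1 \<le> i" "i + 1 \<le> m + n"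
    and odd: "s (i + 1) = - s i" and pw: "poly_weight m n L"
  defines "s' \<equiv> swap_seq s i"
  shows "(s_weight m L s i + s_weight m L s (i + 1) = 0 \<and> s_weight m L s' i + s_weight m L s' (i + 1) = 0)
    \<or> (s_weight m L s' i = s_weight m L s (i + 1) + 1 \<and> s_weight m L s i = s_weight m L s' (i + 1) + 1)"
proof -
  have "s i = 1 \<or> s i = -1" using s_in i unfolding sign_seqs_def by auto
  then show ?thesis
  proof
    assume "s i = 1"
    then show ?thesis
      using s_weight_swap_plus_minus[OF s_in i] odd pw by (simp add: s'_def)
  next
    assume "s i = -1"
    \<comment> \<open>The conclusion is symmetric in s and s', and s = swap_seq s' i.\<close>
    then have "s' i = 1" "s' (i + 1) = -1" using odd by (simp_all add: s'_def swap_seq_def)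
    moreover have "s' \<in> sign_seqs m n" using swap_seq_in_sign_seqs[OF s_in i] by (simp add: s'_def)
    ultimately show ?thesis
      using s_weight_swap_plus_minus[of s' m n i, OF _ i _ _ pw] by (auto simp: s'_def)
  qed
qed

lemma prod_arith_progression_shift:
  fixes u c :: "'a::comm_ring_1"
  shows "(\<Prod>j=1..w. u + of_nat j * c) * u = (\<Prod>j=1..w. u - c + of_nat j * c) * (u + of_nat w * c)"
proof (induction w)
  case 0
  then show ?case by simp
next
  case (Suc w)
  have "(\<Prod>j=1..Suc w. u + of_nat j * c) * u = (\<Prod>j=1..w. u + of_nat j * c) * u * (u + of_nat (Suc w) * c)"
    by (simp add: mult_ac)
  also have "\<dots> = (\<Prod>j=1..w. u - c + of_nat j * c) * (u + of_nat w * c) * (u + of_nat (Suc w) * c)"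
    by (simp only: Suc.IH)
  also have "\<dots> = (\<Prod>j=1..Suc w. u - c + of_nat j * c) * (u + of_nat (Suc w) * c)"
    by (simp add: algebra_simps)
  finally show ?case .
qed

text \<open>Naming in the two identities below: e is s_i; Ti, Tj, y, Y0, Y2 stand for T_i, T_(i+1),
  y_i, y_(i-1), y_(i+1), t for the new polynomial, and Ts for T after the swap of s_i and
  s_(i+1); a suffix m or p marks evaluation at x - s_i h or x + s_i h.\<close>
lemma pair_exchange_even:
  fixes e Ti Tim Tj Tjm y ym yp t tm tp Y0 Y0p Y2 Y2m :: "'a::field"
  assumes "Tj * (y * tp - t * yp) = Ti * Y0p * Y2" and "Tjm * (ym * t - tm * y) = Tim * Y0 * Y2m"
    and "Tim \<noteq> 0" "Tjm \<noteq> 0" "y \<noteq> 0" "t \<noteq> 0" "Y0 \<noteq> 0" "Y2 \<noteq> 0"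
  shows "e * (Ti / Tim) * (Y0p / Y0) * (ym / y) + e * (Tj / Tjm) * (yp / y) * (Y2m / Y2)
       = e * (Ti / Tim) * (Y0p / Y0) * (tm / t) + e * (Tj / Tjm) * (tp / t) * (Y2m / Y2)"
proof -
  have "e * (Ti / Tim) * (Y0p / Y0) * (ym / y) + e * (Tj / Tjm) * (yp / y) * (Y2m / Y2)
       - (e * (Ti / Tim) * (Y0p / Y0) * (tm / t) + e * (Tj / Tjm) * (tp / t) * (Y2m / Y2))
     = e * Ti * Y0p * (Tjm * (ym * t - tm * y)) / (Tim * Y0 * Tjm * y * t)
       - e * Y2m * (Tj * (y * tp - t * yp)) / (Tjm * Y2 * y * t)"
    using assms(3-8) by (simp add: field_simps)
  also have "\<dots> = 0" unfolding assms(1,2) using assms(3-8) by (simp add: field_simps)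
  finally show ?thesis by simp
qed

lemma pair_exchange_odd:
  fixes e Ti Tim Tj Tjp Tsi Tsip Tsj Tsjm U \<Phi> \<Psi> \<Phi>m \<Psi>m y ym t tp Y0 Y0p Y0m Y2 Y2p Y2m :: "'a::field"
  assumes "Ti * U = Tim * \<Phi>" "Tj * U = Tjp * \<Psi>" "Tsi * U = Tsip * \<Psi>m" "Tsj * U = Tsjm * \<Phi>m"
    and "y * tp = \<Phi> * Y0p * Y2 - \<Psi> * Y0 * Y2p" and "ym * t = \<Phi>m * Y0 * Y2m - \<Psi>m * Y0m * Y2"
    and "U \<noteq> 0" "Tim \<noteq> 0" "Tjp \<noteq> 0" "Tsip \<noteq> 0" "Tsjm \<noteq> 0" "y \<noteq> 0" "t \<noteq> 0" "Y0 \<noteq> 0" "Y2 \<noteq> 0"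
  shows "e * (Ti / Tim) * (Y0p / Y0) * (ym / y) + (- e) * (Tj / Tjp) * (ym / y) * (Y2p / Y2)
       = (- e) * (Tsi / Tsip) * (Y0m / Y0) * (tp / t) + e * (Tsj / Tsjm) * (tp / t) * (Y2m / Y2)"
proof -
  have ratios: "Ti / Tim = \<Phi> / U" "Tj / Tjp = \<Psi> / U" "Tsi / Tsip = \<Psi>m / U" "Tsj / Tsjm = \<Phi>m / U"
    using assms(1-4,7-11) by (simp_all add: field_simps)
  have "e * (Ti / Tim) * (Y0p / Y0) * (ym / y) + (- e) * (Tj / Tjp) * (ym / y) * (Y2p / Y2)
      = e * ym * (y * tp) / (U * Y0 * Y2 * y)"
    unfolding ratios assms(5) using assms(7-15) by (simp add: field_simps)
  also have "\<dots> = e * tp * (ym * t) / (U * Y0 * Y2 * t)"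
    using assms(7-15) by (simp add: field_simps)
  also have "\<dots> = (- e) * (Tsi / Tsip) * (Y0m / Y0) * (tp / t) + e * (Tsj / Tsjm) * (tp / t) * (Y2m / Y2)"
    unfolding ratios assms(6) using assms(7-15) by (simp add: field_simps)
  finally show ?thesis .
qed

context
  fixes h :: complex and z :: "nat \<Rightarrow> complex" and p m n :: nat and lam :: "nat \<Rightarrow> nat \<Rightarrow> nat"
begin

private abbreviation T :: "(nat \<Rightarrow> int) \<Rightarrow> nat \<Rightarrow> complex \<Rightarrow> complex" where
  "T \<equiv> Tfun h z p m lam"

private abbreviation \<phi> :: "(nat \<Rightarrow> int) \<Rightarrow> nat \<Rightarrow> complex \<Rightarrow> complex" where
  "\<phi> \<equiv> phifun h z p m lam"

private abbreviation \<psi> :: "(nat \<Rightarrow> int) \<Rightarrow> nat \<Rightarrow> complex \<Rightarrow> complex" where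
  "\<psi> \<equiv> psifun h z p m lam"

private abbreviation Y :: "(nat \<Rightarrow> complex poly) \<Rightarrow> nat \<Rightarrow> complex poly" where
  "Y \<equiv> Yext m n"

lemma Tfun_mult_prod:
  assumes "K \<subseteq> {1..p}" and "\<forall>k\<in>{1..p} - K. s_weight m (lam k) s a = 0"
  shows "T s a x * (\<Prod>k\<in>K. x - z k)
       = T s a (x - of_int (s a) * h) * (\<Prod>k\<in>K. x - z k + of_int (s a) * of_nat (s_weight m (lam k) s a) * h)"
proof -
  have T: "T s a u = (\<Prod>k\<in>K. \<Prod>j=1..s_weight m (lam k) s a. u - z k + of_int (s a) * of_nat j * h)" for u
    unfolding Tfun_def by (rule prod.mono_neutral_right) (use assms in auto)
  have "(\<Prod>j=1..s_weight m (lam k) s a. x - z k + of_int (s a) * of_nat j * h) * (x - z k)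
     = (\<Prod>j=1..s_weight m (lam k) s a. x - of_int (s a) * h - z k + of_int (s a) * of_nat j * h)
       * (x - z k + of_int (s a) * of_nat (s_weight m (lam k) s a) * h)" for k
    using prod_arith_progression_shift[of "x - z k" "of_int (s a) * h" "s_weight m (lam k) s a"]
    by (simp add: algebra_simps)
  then show ?thesis unfolding T prod.distrib[symmetric] by (rule prod.cong[OF refl])
qed

lemma Tfun_shifted_nonzero_imp_ne:
  assumes "T s a (x - of_int (s a) * h) \<noteq> 0" "k \<in> {1..p}" "0 < s_weight m (lam k) s a"
  shows "x \<noteq> z k"
proof -
  have "\<forall>j\<in>{1..s_weight m (lam k) s a}. x - of_int (s a) * h - z k + of_int (s a) * of_nat j * h \<noteq> 0"
    using assms(1,2) unfolding Tfun_def by (simp add: prod_zero_iff)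
  then have "x - of_int (s a) * h - z k + of_int (s a) * of_nat 1 * h \<noteq> 0"
    by (rule bspec) (use assms(3) in simp)
  then show ?thesis by simp
qed

lemma Tfun_odd_ratios:
  assumes odd: "s (i + 1) = - s i"
  defines "K \<equiv> {k\<in>{1..p}. s_weight m (lam k) s i + s_weight m (lam k) s (i + 1) \<noteq> 0}"
    and "e \<equiv> of_int (s i) :: complex"
  shows "T s i x * (\<Prod>k\<in>K. x - z k) = T s i (x - e * h) * \<phi> s i x"
    and "T s (i + 1) x * (\<Prod>k\<in>K. x - z k) = T s (i + 1) (x + e * h) * \<psi> s i x"
proof -
  have K: "K \<subseteq> {1..p}" by (auto simp: K_def)
  have zero: "\<forall>k\<in>{1..p} - K. s_weight m (lam k) s a = 0" if "a = i \<or> a = i + 1" for a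
    using that by (auto simp: K_def)
  show "T s i x * (\<Prod>k\<in>K. x - z k) = T s i (x - e * h) * \<phi> s i x"
    using Tfun_mult_prod[OF K zero[of i]] by (simp add: phifun_def K_def e_def)
  show "T s (i + 1) x * (\<Prod>k\<in>K. x - z k) = T s (i + 1) (x + e * h) * \<psi> s i x"
    using Tfun_mult_prod[OF K zero[of "i + 1"]] odd by (simp add: psifun_def K_def e_def)
qed

lemma Tfun_swap_odd_ratios:
  assumes s_in: "s \<in> sign_seqs m n" and i: "1 \<le> i" "i + 1 \<le> m + n" and odd: "s (i + 1) = - s i"
    and weights: "\<forall>k\<in>{1..p}. poly_weight m n (lam k)"
  defines "K \<equiv> {k\<in>{1..p}. s_weight m (lam k) s i + s_weight m (lam k) s (i + 1) \<noteq> 0}"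
    and "s' \<equiv> swap_seq s i" and "e \<equiv> of_int (s i) :: complex"
  shows "T s' i x * (\<Prod>k\<in>K. x - z k) = T s' i (x + e * h) * \<psi> s i (x - e * h)"
    and "T s' (i + 1) x * (\<Prod>k\<in>K. x - z k) = T s' (i + 1) (x - e * h) * \<phi> s i (x - e * h)"
proof -
  have K: "K \<subseteq> {1..p}" by (auto simp: K_def)
  have w: "(s_weight m (lam k) s i + s_weight m (lam k) s (i + 1) = 0
      \<and> s_weight m (lam k) s' i + s_weight m (lam k) s' (i + 1) = 0)
    \<or> (s_weight m (lam k) s' i = s_weight m (lam k) s (i + 1) + 1
      \<and> s_weight m (lam k) s i = s_weight m (lam k) s' (i + 1) + 1)" if "k \<in> {1..p}" for k
    unfolding s'_def using s_weight_swap_odd[OF s_in i odd] weights that by blast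
  have zero: "\<forall>k\<in>{1..p} - K. s_weight m (lam k) s' a = 0" if "a = i \<or> a = i + 1" for a
  proof
    fix k assume "k \<in> {1..p} - K"
    with w[of k] that show "s_weight m (lam k) s' a = 0" by (auto simp: K_def)
  qed
  have active: "s_weight m (lam k) s' i = s_weight m (lam k) s (i + 1) + 1"
      "s_weight m (lam k) s i = s_weight m (lam k) s' (i + 1) + 1" if "k \<in> K" for k
    using w[of k] that by (auto simp: K_def)
  have s': "s' i = - s i" "s' (i + 1) = s i" using odd by (simp_all add: s'_def swap_seq_def)
  have "T s' i x * (\<Prod>k\<in>K. x - z k) = T s' i (x + e * h)
      * (\<Prod>k\<in>K. x - z k - of_int (s i) * of_nat (s_weight m (lam k) s' i) * h)"
    using Tfun_mult_prod[OF K zero[of i]] s' by (simp add: e_def)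
  also have "(\<Prod>k\<in>K. x - z k - of_int (s i) * of_nat (s_weight m (lam k) s' i) * h) = \<psi> s i (x - e * h)"
    unfolding psifun_def K_def[symmetric]
    by (rule prod.cong[OF refl]) (use active(1) odd in \<open>simp add: e_def algebra_simps\<close>)
  finally show "T s' i x * (\<Prod>k\<in>K. x - z k) = T s' i (x + e * h) * \<psi> s i (x - e * h)" .
  have "T s' (i + 1) x * (\<Prod>k\<in>K. x - z k) = T s' (i + 1) (x - e * h)
      * (\<Prod>k\<in>K. x - z k + of_int (s i) * of_nat (s_weight m (lam k) s' (i + 1)) * h)"
    using Tfun_mult_prod[OF K zero[of "i + 1"]] s' by (simp add: e_def)
  also have "(\<Prod>k\<in>K. x - z k + of_int (s i) * of_nat (s_weight m (lam k) s' (i + 1)) * h) = \<phi> s i (x - e * h)"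
    unfolding phifun_def K_def[symmetric]
    by (rule prod.cong[OF refl]) (use active(2) in \<open>simp add: e_def algebra_simps\<close>)
  finally show "T s' (i + 1) x * (\<Prod>k\<in>K. x - z k) = T s' (i + 1) (x - e * h) * \<phi> s i (x - e * h)" .
qed

lemma odd_ratio_denominator_nonzero:
  assumes s_in: "s \<in> sign_seqs m n" and i: "1 \<le> i" "i + 1 \<le> m + n" and odd: "s (i + 1) = - s i"
    and weights: "\<forall>k\<in>{1..p}. poly_weight m n (lam k)"
    and T_nonzero: "T s i (x - of_int (s i) * h) \<noteq> 0"
  shows "(\<Prod>k\<in>{k\<in>{1..p}. s_weight m (lam k) s i + s_weight m (lam k) s (i + 1) \<noteq> 0}. x - z k) \<noteq> 0"
proof -
  have "x \<noteq> z k" if "k \<in> {1..p}" "s_weight m (lam k) s i + s_weight m (lam k) s (i + 1) \<noteq> 0" for k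
  proof -
    from that have "0 < s_weight m (lam k) s i"
      using s_weight_swap_odd[OF s_in i odd] weights by fastforce
    with T_nonzero \<open>k \<in> {1..p}\<close> show ?thesis by (rule Tfun_shifted_nonzero_imp_ne)
  qed
  then show ?thesis by simp
qed

definition Efun_term :: "(nat \<Rightarrow> int) \<Rightarrow> (nat \<Rightarrow> complex poly) \<Rightarrow> complex \<Rightarrow> nat \<Rightarrow> complex" where
  "Efun_term s y x a = of_int (s a)
     * (T s a x / T s a (x - of_int (s a) * h))
     * (poly (Y y (a - 1)) (x + of_int (s a) * h) / poly (Y y (a - 1)) x)
     * (poly (Y y a) (x - of_int (s a) * h) / poly (Y y a) x)"

lemma Efun_eq_sum_Efun_term: "Efun h z p m n lam s y x = (\<Sum>a=1..m+n. Efun_term s y x a)"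
  by (simp add: Efun_def Efun_term_def shev_def)

lemma Efun_eq_if_Efun_terms_eq:
  assumes "1 \<le> i" "i + 1 \<le> m + n"
    and "\<And>a. a \<in> {1..m+n} - {i, i + 1} \<Longrightarrow> Efun_term s y x a = Efun_term s' y' x a"
    and "Efun_term s y x i + Efun_term s y x (i + 1) = Efun_term s' y' x i + Efun_term s' y' x (i + 1)"
  shows "Efun h z p m n lam s y x = Efun h z p m n lam s' y' x"
proof -
  have split: "(\<Sum>a=1..m+n. g a) = (\<Sum>a\<in>{1..m+n} - {i, i + 1}. g a) + (g i + g (i + 1))"
    for g :: "nat \<Rightarrow> complex"
    using assms(1,2) by (subst sum.subset_diff[of "{i, i + 1}"]) auto
  have "(\<Sum>a\<in>{1..m+n} - {i, i + 1}. Efun_term s y x a) = (\<Sum>a\<in>{1..m+n} - {i, i + 1}. Efun_term s' y' x a)"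
    using assms(3) by (rule sum.cong[OF refl])
  with assms(4) show ?thesis
    unfolding Efun_eq_sum_Efun_term split by simp
qed

lemma Yext_fun_upd: "b \<noteq> i \<Longrightarrow> Y (y(i := yt)) b = Y y b"
  by (simp add: Yext_def)

lemma Efun_term_fun_upd_other:
  "a \<noteq> i \<Longrightarrow> a \<noteq> i + 1 \<Longrightarrow> Efun_term s (y(i := yt)) x a = Efun_term s y x a"
  by (simp add: Efun_term_def Yext_fun_upd)

lemma Efun_term_swap_seq_other:
  "1 \<le> i \<Longrightarrow> a \<noteq> i \<Longrightarrow> a \<noteq> i + 1 \<Longrightarrow> Efun_term (swap_seq s i) y x a = Efun_term s y x a"
  by (simp add: Efun_term_def Tfun_def swap_seq_other s_weight_swap_seq_other)

lemma Edef_nonzero: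
  assumes "Edef h z p m n lam s y x" "1 \<le> a" "a \<le> m + n"
  shows "T s a (x - of_int (s a) * h) \<noteq> 0" "poly (Y y (a - 1)) x \<noteq> 0" "poly (Y y a) x \<noteq> 0"
  using assms by (auto simp: Edef_def)

lemma Efun_terms_even:
  assumes i: "1 \<le> i" "i + 1 \<le> m + n" and even: "s (i + 1) = s i"
    and wronskian: "\<And>x. T s (i + 1) x
        * (poly (y i) x * shev h yt (- s i) x - poly yt x * shev h (y i) (- s i) x)
      = T s i x * shev h (Y y (i - 1)) (- s i) x * poly (Y y (i + 1)) x"
    and defined: "Edef h z p m n lam s y x" "Edef h z p m n lam s (y(i := yt)) x"
  shows "Efun_term s y x i + Efun_term s y x (i + 1)
       = Efun_term s (y(i := yt)) x i + Efun_term s (y(i := yt)) x (i + 1)"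
proof -
  define e where "e = (of_int (s i) :: complex)"
  have Y: "Y y i = y i" "Y (y(i := yt)) i = yt" "Y (y(i := yt)) (i - 1) = Y y (i - 1)"
    "Y (y(i := yt)) (i + 1) = Y y (i + 1)"
    using i by (auto simp: Yext_def)
  have wr: "T s (i + 1) u * (poly (y i) u * poly yt (u + e * h) - poly yt u * poly (y i) (u + e * h))
      = T s i u * poly (Y y (i - 1)) (u + e * h) * poly (Y y (i + 1)) u" for u
    using wronskian[of u] by (simp add: shev_def e_def)
  have wr_shifted: "T s (i + 1) (x - e * h)
      * (poly (y i) (x - e * h) * poly yt x - poly yt (x - e * h) * poly (y i) x)
      = T s i (x - e * h) * poly (Y y (i - 1)) x * poly (Y y (i + 1)) (x - e * h)"
    using wr[of "x - e * h"] by simp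
  have "i \<le> m + n" using i by simp
  note nz = Edef_nonzero[OF defined(1) i(1) this] Edef_nonzero[OF defined(1) _ i(2)]
    Edef_nonzero(3)[OF defined(2) i(1) this]
  show ?thesis
    using pair_exchange_even[OF wr[of x] wr_shifted] nz i even Y
    by (simp add: Efun_term_def e_def)
qed

lemma Efun_terms_odd:
  assumes s_in: "s \<in> sign_seqs m n" and i: "1 \<le> i" "i + 1 \<le> m + n" and odd: "s (i + 1) = - s i"
    and weights: "\<forall>k\<in>{1..p}. poly_weight m n (lam k)"
    and exchange: "\<And>x. poly (y i) x * shev h yt (- s i) x
      = \<phi> s i x * shev h (Y y (i - 1)) (- s i) x * poly (Y y (i + 1)) x
        - \<psi> s i x * poly (Y y (i - 1)) x * shev h (Y y (i + 1)) (- s i) x"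
    and defined: "Edef h z p m n lam s y x" "Edef h z p m n lam (swap_seq s i) (y(i := yt)) x"
  shows "Efun_term s y x i + Efun_term s y x (i + 1)
       = Efun_term (swap_seq s i) (y(i := yt)) x i + Efun_term (swap_seq s i) (y(i := yt)) x (i + 1)"
proof -
  define e where "e = (of_int (s i) :: complex)"
  define s' where "s' = swap_seq s i"
  define K where "K = {k\<in>{1..p}. s_weight m (lam k) s i + s_weight m (lam k) s (i + 1) \<noteq> 0}"
  have Y: "Y y i = y i" "Y (y(i := yt)) i = yt" "Y (y(i := yt)) (i - 1) = Y y (i - 1)"
    "Y (y(i := yt)) (i + 1) = Y y (i + 1)"
    using i by (auto simp: Yext_def)
  have s': "s' i = - s i" "s' (i + 1) = s i" using odd by (simp_all add: s'_def swap_seq_def)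
  have ex: "poly (y i) u * poly yt (u + e * h)
      = \<phi> s i u * poly (Y y (i - 1)) (u + e * h) * poly (Y y (i + 1)) u
        - \<psi> s i u * poly (Y y (i - 1)) u * poly (Y y (i + 1)) (u + e * h)" for u
    using exchange[of u] by (simp add: shev_def e_def)
  have ex_shifted: "poly (y i) (x - e * h) * poly yt x
      = \<phi> s i (x - e * h) * poly (Y y (i - 1)) x * poly (Y y (i + 1)) (x - e * h)
        - \<psi> s i (x - e * h) * poly (Y y (i - 1)) (x - e * h) * poly (Y y (i + 1)) x"
    using ex[of "x - e * h"] by simp
  note ratios = Tfun_odd_ratios[OF odd, of x, folded K_def e_def]
    Tfun_swap_odd_ratios[OF s_in i odd weights, of x, folded K_def s'_def e_def]
  have "i \<le> m + n" using i by simp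
  note nz = Edef_nonzero[OF defined(1) i(1) this] Edef_nonzero[OF defined(1) _ i(2)]
    Edef_nonzero[OF defined(2)[folded s'_def] i(1) this]
    Edef_nonzero(1)[OF defined(2)[folded s'_def] _ i(2)]
  have U: "(\<Prod>k\<in>K. x - z k) \<noteq> 0"
    unfolding K_def by (rule odd_ratio_denominator_nonzero[OF s_in i odd weights nz(1)])
  show ?thesis
    using pair_exchange_odd[OF ratios ex[of x] ex_shifted U] nz i odd s' Y
    by (simp add: Efun_term_def e_def s'_def[symmetric])
qed

end

theorem lemma5p5:
  fixes h :: complex and m n p i :: nat and z :: "nat \<Rightarrow> complex"
    and lam :: "nat \<Rightarrow> nat \<Rightarrow> nat" and s :: "nat \<Rightarrow> int"
    and y :: "nat \<Rightarrow> complex poly" and yt :: "complex poly"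
  assumes hne: "h \<noteq> 0"
    and weights: "\<forall>k\<in>{1..p}. poly_weight m n (lam k)"
    and generic: "\<forall>k\<in>{1..p}. \<forall>l\<in>{1..p}. k \<noteq> l \<longrightarrow> (\<forall>j::int. z k - z l \<noteq> of_int j * h)"
    and s_in: "s \<in> sign_seqs m n"
    and i_range: "1 \<le> i" "i \<le> m + n - 1"
    and even_case: "s i = s (i+1) \<longrightarrow>
      (\<forall>x. Tfun h z p m lam s (i+1) x
             * (poly (y i) x * shev h yt (- s i) x - poly yt x * shev h (y i) (- s i) x)
           = Tfun h z p m lam s i x * shev h (Yext m n y (i - 1)) (- s i) x
             * poly (Yext m n y (i + 1)) x)"
    and odd_case: "s i = - s (i+1) \<longrightarrow>
      (\<forall>x. poly (y i) x * shev h yt (- s i) x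
           = phifun h z p m lam s i x * shev h (Yext m n y (i - 1)) (- s i) x
               * poly (Yext m n y (i + 1)) x
             - psifun h z p m lam s i x * poly (Yext m n y (i - 1)) x
               * shev h (Yext m n y (i + 1)) (- s i) x)"
  shows "\<forall>x. Edef h z p m n lam s y x
              \<and> Edef h z p m n lam (if s i = s (i+1) then s else swap_seq s i) (y(i := yt)) x
           \<longrightarrow> Efun h z p m n lam s y x
               = Efun h z p m n lam (if s i = s (i+1) then s else swap_seq s i) (y(i := yt)) x"
proof (intro allI impI)
  fix x
  assume defined: "Edef h z p m n lam s y x
    \<and> Edef h z p m n lam (if s i = s (i+1) then s else swap_seq s i) (y(i := yt)) x"
  have i: "1 \<le> i" "i + 1 \<le> m + n" using i_range by auto
  show "Efun h z p m n lam s y x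
    = Efun h z p m n lam (if s i = s (i+1) then s else swap_seq s i) (y(i := yt)) x"
  proof (cases "s i = s (i + 1)")
    case True
    have "Efun h z p m n lam s y x = Efun h z p m n lam s (y(i := yt)) x"
      using i Efun_terms_even[OF i True[symmetric]] even_case True defined
      by (intro Efun_eq_if_Efun_terms_eq) (auto simp: Efun_term_fun_upd_other)
    with True show ?thesis by simp
  next
    case False
    have "s i \<in> {1, -1}" "s (i + 1) \<in> {1, -1}" using s_in i by (auto simp: sign_seqs_def)
    with False have odd: "s (i + 1) = - s i" by auto
    have "Efun h z p m n lam s y x = Efun h z p m n lam (swap_seq s i) (y(i := yt)) x"
      using i Efun_terms_odd[OF s_in i odd weights] odd_case odd False defined
      by (intro Efun_eq_if_Efun_terms_eq) (auto simp: Efun_term_fun_upd_other Efun_term_swap_seq_other)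
    with False show ?thesis by simp
  qed
qed

end
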